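(* Let $a$ be a smooth, positive, increasing function on $(0,\infty)$ and consider the two-dimensional Robertson–Walker spacetime $ds^2=-dt^2+a^2(t)\,d\chi^2$ with comoving worldlines $\beta_0:\chi=0$, $\beta_1:\chi=\chi_1$, $\beta_2:\chi=\chi_2$. Let $v_s$ denote one of the four geometric relative velocities (Fermi, kinematic, spectroscopic, astrometric), and suppose there is an injective function $f$ such that for every comoving observer $\beta_j$ ($\chi=\chi_j$), every proper time $\tau$ of $\beta_j$ and every comoving particle with coordinate $\chi$ (in the range where $v_s$ is defined), the geometric velocity of the particle relative to $\beta_j$ at proper time $\tau$ equals $f(v)$, where $v=\dot a(\tau)(\chi-\chi_j)$ is the Hubble velocity. Let $v_{s1}$ be the geometric velocity of $\beta_1$ relative to $\beta_0$ at proper time $\tau_0^-$ of $\beta_0$, $v_{s2}$ the geometric velocity of $\beta_2$ relative to $\beta_1$ at proper time $\tau_1$ of $\beta_1$, and $v_{s3}$ the geometric velocity of $\beta_2$ relative to $\beta_0$ at proper time $\tau_0^+$ of $\beta_0$ (possibly $\tau_0^-=\tau_0^+$). Then, provided $\dot a(\tau_0^-)\ne0$ and $\dot a(\tau_1)\neq0$, $$v_{s3}=f\!\left(\frac{\dot a(\tau_0^+)}{\dot a(\tau_0^-)}f^{-1}(v_{s1})+\frac{\dot a(\tau_0^+)}{\dot a(\tau_1)}f^{-1}(v_{s2})\right).$$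
   Context: Comoving worldlines $\chi=\text{const}$ are parametrized by $t$, their proper time. The Hubble velocity of a comoving particle with coordinate $\chi$ relative to the comoving observer at $\chi_j$ at cosmological time $\tau$ is $\dot a(\tau)(\chi-\chi_j)$ (rate of change of proper distance on the slice $t=\tau$). The geometric relative velocities are the scalar components (along $a^{-1}\partial_\chi$) of the Fermi, kinematic, spectroscopic and astrometric relative velocities of the particle with respect to the observer at its proper time $\tau$. *)

theory Defs
  imports "HOL-Analysis.Analysis"
begin

definition RW_scale_factor :: "(real \<Rightarrow> real) \<Rightarrow> bool" where
  "RW_scale_factor a \<longleftrightarrow>
     (\<forall>n. \<forall>t>0. ((deriv ^^ n) a) differentiable (at t)) \<and>
     (\<forall>t>0. a t > 0) \<and> mono_on {0<..} a"

end

theory Submission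
  imports Defs
begin

text \<open>Dividing a Hubble velocity by \<open>\<dot>a(\<tau>)\<close> recovers a comoving coordinate difference, these
  differences add along \<open>\<chi>\<^sub>0, \<chi>\<^sub>1, \<chi>\<^sub>2\<close>, and injectivity of f lets \<open>inv f\<close> undo f.\<close>

lemma hubble_velocity_composition:
  fixes H f :: "real \<Rightarrow> real" and \<chi>0 \<chi>1 \<chi>2 t0m t0p t1 :: real
  assumes "inj f" and "H t0m \<noteq> 0" and "H t1 \<noteq> 0"
  shows "f (H t0p * (\<chi>2 - \<chi>0)) =
    f (H t0p / H t0m * inv f (f (H t0m * (\<chi>1 - \<chi>0)))
       + H t0p / H t1 * inv f (f (H t1 * (\<chi>2 - \<chi>1))))"
proof -
  have "H t0p * (\<chi>2 - \<chi>0) =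
      H t0p / H t0m * (H t0m * (\<chi>1 - \<chi>0)) + H t0p / H t1 * (H t1 * (\<chi>2 - \<chi>1))"
    using assms(2,3) by (simp add: field_simps)
  then show ?thesis
    using \<open>inj f\<close> by (simp add: inv_f_f)
qed

theorem theorem5:
  fixes a :: "real \<Rightarrow> real"
    and vs :: "real \<Rightarrow> real \<Rightarrow> real \<Rightarrow> real"
    and Dom :: "real \<Rightarrow> real \<Rightarrow> real \<Rightarrow> bool"
    and f :: "real \<Rightarrow> real"
    and c1 c2 \<tau>0m \<tau>0p \<tau>1 :: real
  assumes "RW_scale_factor a"
    and "inj f"
    and hyp: "\<And>cj \<tau> c. cj \<in> {0, c1, c2} \<Longrightarrow> \<tau> > 0 \<Longrightarrow> Dom cj \<tau> c \<Longrightarrow>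
              vs cj \<tau> c = f (deriv a \<tau> * (c - cj))"
    and "\<tau>0m > 0" and "\<tau>0p > 0" and "\<tau>1 > 0"
    and "Dom 0 \<tau>0m c1" and "Dom c1 \<tau>1 c2" and "Dom 0 \<tau>0p c2"
    and "deriv a \<tau>0m \<noteq> 0" and "deriv a \<tau>1 \<noteq> 0"
  shows "vs 0 \<tau>0p c2 =
    f (deriv a \<tau>0p / deriv a \<tau>0m * inv f (vs 0 \<tau>0m c1)
       + deriv a \<tau>0p / deriv a \<tau>1 * inv f (vs c1 \<tau>1 c2))"
proof -
  have v1: "vs 0 \<tau>0m c1 = f (deriv a \<tau>0m * (c1 - 0))"
    using hyp \<open>\<tau>0m > 0\<close> \<open>Dom 0 \<tau>0m c1\<close> by blast
  have v2: "vs c1 \<tau>1 c2 = f (deriv a \<tau>1 * (c2 - c1))"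
    using hyp \<open>\<tau>1 > 0\<close> \<open>Dom c1 \<tau>1 c2\<close> by blast
  have v3: "vs 0 \<tau>0p c2 = f (deriv a \<tau>0p * (c2 - 0))"
    using hyp \<open>\<tau>0p > 0\<close> \<open>Dom 0 \<tau>0p c2\<close> by blast
  show ?thesis
    unfolding v1 v2 v3
    using hubble_velocity_composition \<open>inj f\<close> \<open>deriv a \<tau>0m \<noteq> 0\<close> \<open>deriv a \<tau>1 \<noteq> 0\<close> .
qed

end
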